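(* Let $0<\mu\le L$, $f\in\mathcal S^2_{\mu,L}(\mathbb R^n)$ with minimizer $x^*$, $\beta\in[0,1]$, $s>0$, and let $X=X(t)$ solve $$\ddot X+2\sqrt\mu\,\dot X+\beta\sqrt s\,\nabla^2 f(X)\dot X+(1+\sqrt{\mu s})\nabla f(X)=0.$$ Define $$\mathcal E_\beta(t)=(1+\sqrt{\mu s})\big(f(X)-f(x^* )\big)+\tfrac14\|\dot X\|^2+\tfrac14\big\|\dot X+2\sqrt\mu(X-x^* )+\beta\sqrt s\,\nabla f(X)\big\|^2.$$ Then $$\frac{d\mathcal E_\beta(t)}{dt}\le-\frac{\sqrt\mu}{4}\mathcal E_\beta(t)-\Delta_\beta,$$ where $$\Delta_\beta=\frac14\left(\frac{8\beta s\sqrt\mu-3s\beta^2\sqrt\mu}{4}\|\nabla f(X)\|^2+2\sqrt\mu\|\dot X\|^2+(\sqrt\mu+\mu\sqrt s)\big(f(X)-f(x^* )\big)\right).$$ In particular, $\frac{d\mathcal E_\beta(t)}{dt}\le-\frac{\sqrt\mu}{4}\mathcal E_\beta(t)$.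
   Context: $\mathcal S^2_{\mu,L}(\mathbb R^n)$ is the class of twice differentiable, $\mu$-strongly convex functions $f:\mathbb R^n\to\mathbb R$ (i.e. $f(y)\ge f(x)+\langle\nabla f(x),y-x\rangle+\frac\mu2\|y-x\|^2$) whose gradient is $L$-Lipschitz and whose Hessian is Lipschitz in Frobenius norm. *)

theory Defs
  imports "HOL-Analysis.Analysis"
begin

definition frob_norm :: "('a::euclidean_space \<Rightarrow> 'a) \<Rightarrow> real" where
  "frob_norm T = sqrt (\<Sum>b\<in>Basis. (norm (T b))\<^sup>2)"

definition S2_class :: "real \<Rightarrow> real \<Rightarrow> ('a::euclidean_space \<Rightarrow> real) \<Rightarrow> ('a \<Rightarrow> 'a)
    \<Rightarrow> ('a \<Rightarrow> 'a \<Rightarrow> 'a) \<Rightarrow> bool" where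
  "S2_class \<mu> L f gradf hessf \<longleftrightarrow>
     (\<forall>x. (f has_derivative (\<lambda>h. gradf x \<bullet> h)) (at x)) \<and>
     (\<forall>x. (gradf has_derivative hessf x) (at x)) \<and>
     (\<forall>x y. f y \<ge> f x + gradf x \<bullet> (y - x) + \<mu> / 2 * (norm (y - x))\<^sup>2) \<and>
     (\<forall>x y. norm (gradf x - gradf y) \<le> L * norm (x - y)) \<and>
     (\<exists>M. \<forall>x y. frob_norm (\<lambda>h. hessf x h - hessf y h) \<le> M * norm (x - y))"

end

theory Submission
  imports Defs
begin

text \<open>Along the ODE the mixed velocity W = V + 2 sqrt mu (X - x*) + beta sqrt s grad f(X) has derivative
  W' = -(1 + sqrt (mu s)) grad f(X), so differentiating E and eliminating the acceleration gives
  E' = - sqrt mu c <grad f(X), X - x*> - beta sqrt s c/2 |grad f(X)|^2 - sqrt mu |V|^2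
       - beta sqrt s/2 <V, hess f(X) V>  with  c = 1 + sqrt (mu s).
  The Hessian term is nonpositive since the gradient of a convex function is monotone. Strong convexity
  gives <grad f(X), X - x*> >= f(X) - f(x*) + mu/2 |X - x*|^2 and f(X) - f(x*) >= mu/2 |X - x*|^2,
  and |W|^2 <= 3 (|V|^2 + 4 mu |X - x*|^2 + beta^2 s |grad f(X)|^2). After these substitutions the
  claimed bound is a nonnegative combination of nonnegative terms.\<close>

lemma S2_classD:
  assumes "S2_class \<mu> L f gradf hessf"
  shows "(f has_derivative (\<lambda>h. gradf x \<bullet> h)) (at x)"
    and "(gradf has_derivative hessf x) (at x)"
    and "f x + gradf x \<bullet> (y - x) + \<mu> / 2 * (norm (y - x))\<^sup>2 \<le> f y"
  using assms unfolding S2_class_def by blast+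

lemma gradient_zero_at_minimum:
  assumes "(f has_derivative (\<lambda>h. G \<bullet> h)) (at x)" and "\<forall>y. f x \<le> f y"
  shows "G = 0"
proof -
  have "(\<lambda>h. G \<bullet> h) = (\<lambda>h. 0)"
    using differential_zero_maxmin[OF _ open_UNIV assms(1)] assms(2) by blast
  then have "G \<bullet> G = 0" by metis
  then show ?thesis by simp
qed

lemma monotone_derivative_nonneg:
  fixes g :: "'a::real_inner \<Rightarrow> 'a"
  assumes mono: "\<And>x y. 0 \<le> (g y - g x) \<bullet> (y - x)"
    and deriv: "(g has_derivative H) (at x)"
  shows "0 \<le> H v \<bullet> v"
proof -
  define \<phi> where "\<phi> h = g (x + h *\<^sub>R v) \<bullet> v" for h :: real
  have "((\<lambda>h. x + h *\<^sub>R v) has_derivative (\<lambda>h. h *\<^sub>R v)) (at 0)"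
    by (auto intro!: derivative_eq_intros)
  from diff_chain_at[OF this] deriv
  have "((\<lambda>h. g (x + h *\<^sub>R v)) has_derivative (\<lambda>h. H (h *\<^sub>R v))) (at 0)"
    by (simp add: o_def)
  then have "(\<phi> has_real_derivative H v \<bullet> v) (at 0)"
    unfolding \<phi>_def has_field_derivative_def
    by (auto intro!: derivative_eq_intros simp: linear_scale[OF has_derivative_linear[OF deriv]] mult.commute)
  then have "((\<lambda>h. (\<phi> h - \<phi> 0) / h) \<longlongrightarrow> H v \<bullet> v) (at_right 0)"
    unfolding DERIV_def by (auto intro: tendsto_mono at_le)
  moreover have "\<forall>\<^sub>F h in at_right 0. 0 \<le> (\<phi> h - \<phi> 0) / h"
  proof (rule eventually_at_right_less[THEN eventually_mono])
    fix h :: real assume "0 < h"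
    have "0 \<le> (g (x + h *\<^sub>R v) - g x) \<bullet> ((x + h *\<^sub>R v) - x)" by (rule mono)
    with \<open>0 < h\<close> show "0 \<le> (\<phi> h - \<phi> 0) / h"
      by (simp add: \<phi>_def inner_diff_left zero_le_mult_iff)
  qed
  ultimately show ?thesis by (rule tendsto_lowerbound) simp
qed

context
  fixes f :: "'a::real_inner \<Rightarrow> real" and gradf :: "'a \<Rightarrow> 'a" and \<mu> :: real
  assumes strongly_convex: "\<And>x y. f x + gradf x \<bullet> (y - x) + \<mu> / 2 * (norm (y - x))\<^sup>2 \<le> f y"
begin

lemma strongly_convex_gradient_monotone:
  assumes "0 \<le> \<mu>"
  shows "0 \<le> (gradf y - gradf x) \<bullet> (y - x)"
proof -
  have "0 \<le> \<mu> * (norm (y - x))\<^sup>2" using assms by simp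
  then show ?thesis
    using strongly_convex[of x y] strongly_convex[of y x]
    by (simp add: norm_minus_commute inner_diff_left inner_diff_right)
qed

lemma strongly_convex_gradient_inner_ge:
  "f x - f z + \<mu> / 2 * (norm (x - z))\<^sup>2 \<le> gradf x \<bullet> (x - z)"
  using strongly_convex[of x z] by (simp add: norm_minus_commute inner_diff_right)

lemma strongly_convex_gap_ge:
  assumes "gradf z = 0"
  shows "\<mu> / 2 * (norm (x - z))\<^sup>2 \<le> f x - f z"
  using strongly_convex[of z x] assms by simp

end

lemma energy_has_derivative_along_ode:
  fixes f :: "'a::real_inner \<Rightarrow> real" and gradf :: "'a \<Rightarrow> 'a" and hessf :: "'a \<Rightarrow> 'a \<Rightarrow> 'a"
    and X V A :: "real \<Rightarrow> 'a" and xstar :: 'a and m b c :: real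
  assumes dX: "(X has_vector_derivative V t) (at t)"
    and dV: "(V has_vector_derivative A t) (at t)"
    and df: "(f has_derivative (\<lambda>h. gradf (X t) \<bullet> h)) (at (X t))"
    and dgrad: "(gradf has_derivative hessf (X t)) (at (X t))"
    and ode: "A t + (2 * m) *\<^sub>R V t + b *\<^sub>R hessf (X t) (V t) + c *\<^sub>R gradf (X t) = 0"
  shows "((\<lambda>t. c * (f (X t) - f xstar) + 1/4 * (norm (V t))\<^sup>2
            + 1/4 * (norm (V t + (2 * m) *\<^sub>R (X t - xstar) + b *\<^sub>R gradf (X t)))\<^sup>2)
          has_real_derivative
           - m * c * (gradf (X t) \<bullet> (X t - xstar)) - b * c / 2 * (norm (gradf (X t)))\<^sup>2
           - m * (norm (V t))\<^sup>2 - b / 2 * (V t \<bullet> hessf (X t) (V t))) (at t)"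
proof -
  define W where "W t = V t + (2 * m) *\<^sub>R (X t - xstar) + b *\<^sub>R gradf (X t)" for t
  have dX': "(X has_derivative (\<lambda>h. h *\<^sub>R V t)) (at t)"
    and dV': "(V has_derivative (\<lambda>h. h *\<^sub>R A t)) (at t)"
    using dX dV by (simp_all add: has_vector_derivative_def)
  have dfX: "((\<lambda>t. f (X t)) has_derivative (\<lambda>h. h * (gradf (X t) \<bullet> V t))) (at t)"
    using diff_chain_at[OF dX' df] by (simp add: o_def)
  have dgradX: "((\<lambda>t. gradf (X t)) has_derivative (\<lambda>h. h *\<^sub>R hessf (X t) (V t))) (at t)"
    using diff_chain_at[OF dX' dgrad] linear_scale[OF has_derivative_linear[OF dgrad]]
    by (simp add: o_def)
  have A_eq: "A t = - ((2 * m) *\<^sub>R V t + b *\<^sub>R hessf (X t) (V t) + c *\<^sub>R gradf (X t))"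
    using ode by (simp add: algebra_simps eq_neg_iff_add_eq_0)
  then have ode_W: "A t + (2 * m) *\<^sub>R V t + b *\<^sub>R hessf (X t) (V t) = - c *\<^sub>R gradf (X t)"
    by simp
  have "(W has_derivative (\<lambda>h. h *\<^sub>R (A t + (2 * m) *\<^sub>R V t + b *\<^sub>R hessf (X t) (V t)))) (at t)"
    unfolding W_def
    by (rule derivative_eq_intros dV' dX' dgradX refl | simp add: algebra_simps)+
  then have dW: "(W has_derivative (\<lambda>h. - (h * c) *\<^sub>R gradf (X t))) (at t)"
    unfolding ode_W by simp
  have "((\<lambda>t. c * (f (X t) - f xstar) + 1/4 * (V t \<bullet> V t) + 1/4 * (W t \<bullet> W t)) has_derivative
     (\<lambda>h. h * (c * (gradf (X t) \<bullet> V t) + 1/2 * (V t \<bullet> A t) - c/2 * (W t \<bullet> gradf (X t))))) (at t)"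
    by (rule derivative_eq_intros dfX dV' dW refl | simp add: algebra_simps inner_commute)+
  moreover have "c * (gradf (X t) \<bullet> V t) + 1/2 * (V t \<bullet> A t) - c/2 * (W t \<bullet> gradf (X t))
      = - m * c * (gradf (X t) \<bullet> (X t - xstar)) - b * c / 2 * (norm (gradf (X t)))\<^sup>2
        - m * (norm (V t))\<^sup>2 - b / 2 * (V t \<bullet> hessf (X t) (V t))"
    unfolding W_def A_eq
    by (simp add: power2_norm_eq_inner inner_add_left inner_add_right inner_diff_right
        inner_commute algebra_simps)
  ultimately show ?thesis
    unfolding has_field_derivative_def W_def power2_norm_eq_inner mult_commute_abs by simp
qed

lemma norm_add3_squared_le:
  fixes a b c :: "'a::real_inner"
  shows "(norm (a + b + c))\<^sup>2 \<le> 3 * ((norm a)\<^sup>2 + (norm b)\<^sup>2 + (norm c)\<^sup>2)"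
proof -
  have "0 \<le> (norm (a - b))\<^sup>2 + (norm (a - c))\<^sup>2 + (norm (b - c))\<^sup>2" by simp
  then show ?thesis
    by (simp add: power2_norm_eq_inner inner_add_left inner_add_right inner_diff_left
        inner_diff_right inner_commute)
qed

lemma lyapunov_decay_certificate:
  fixes m r \<beta> gap ip g2 v2 x2 w2 q :: real
  assumes "gap + m\<^sup>2 / 2 * x2 \<le> ip" and "m\<^sup>2 / 2 * x2 \<le> gap"
    and "w2 \<le> 3 * (v2 + 4 * m\<^sup>2 * x2 + \<beta>\<^sup>2 * r\<^sup>2 * g2)"
    and "0 \<le> m" "0 \<le> r" "0 \<le> \<beta>" "0 \<le> g2" "0 \<le> v2" "0 \<le> x2" "0 \<le> q"
  shows "- m * (1 + m * r) * ip - \<beta> * r * (1 + m * r) / 2 * g2 - m * v2 - \<beta> * r / 2 * q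
    \<le> - (m / 4) * ((1 + m * r) * gap + 1/4 * v2 + 1/4 * w2)
      - 1/4 * ((8 * \<beta> * r\<^sup>2 * m - 3 * r\<^sup>2 * \<beta>\<^sup>2 * m) / 4 * g2 + 2 * m * v2 + (m + m\<^sup>2 * r) * gap)"
proof -
  \<comment> \<open>The right side minus the left side is t1 + t2/2 + t3/16 + 3 t4/4 + t5/2 + t6/4 + t7/2
    for the seven terms t1, ..., t7 below.\<close>
  have "0 \<le> m * (1 + m * r) * (ip - gap - m\<^sup>2 / 2 * x2)"
    and "0 \<le> m * (1 + m * r) * (gap - m\<^sup>2 / 2 * x2)"
    and "0 \<le> m * (3 * (v2 + 4 * m\<^sup>2 * x2 + \<beta>\<^sup>2 * r\<^sup>2 * g2) - w2)"
    and "0 \<le> m ^ 4 * r * x2" "0 \<le> \<beta> * r * g2" "0 \<le> m * v2" "0 \<le> \<beta> * r * q"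
    using assms by simp_all
  then show ?thesis
    by (simp add: field_simps power2_eq_square power4_eq_xxxx)
qed

lemma lyapunov_decay_pointwise:
  fixes v x g :: "'a::real_inner" and \<mu> s \<beta> gap q :: real
  assumes "0 \<le> \<mu>" "0 \<le> s" "0 \<le> \<beta>"
    and "gap + \<mu> / 2 * (norm x)\<^sup>2 \<le> g \<bullet> x" and "\<mu> / 2 * (norm x)\<^sup>2 \<le> gap" and "0 \<le> q"
  shows "- sqrt \<mu> * (1 + sqrt (\<mu> * s)) * (g \<bullet> x) - \<beta> * sqrt s * (1 + sqrt (\<mu> * s)) / 2 * (norm g)\<^sup>2
      - sqrt \<mu> * (norm v)\<^sup>2 - \<beta> * sqrt s / 2 * q
    \<le> - (sqrt \<mu> / 4) * ((1 + sqrt (\<mu> * s)) * gap + 1/4 * (norm v)\<^sup>2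
          + 1/4 * (norm (v + (2 * sqrt \<mu>) *\<^sub>R x + (\<beta> * sqrt s) *\<^sub>R g))\<^sup>2)
      - 1/4 * ((8 * \<beta> * s * sqrt \<mu> - 3 * s * \<beta>\<^sup>2 * sqrt \<mu>) / 4 * (norm g)\<^sup>2
          + 2 * sqrt \<mu> * (norm v)\<^sup>2 + (sqrt \<mu> + \<mu> * sqrt s) * gap)"
proof -
  obtain m r where "0 \<le> m" "0 \<le> r" and \<mu>: "\<mu> = m\<^sup>2" and s: "s = r\<^sup>2"
    using assms(1,2) by (metis real_sqrt_ge_zero real_sqrt_pow2)
  have "(norm (v + (2 * m) *\<^sub>R x + (\<beta> * r) *\<^sub>R g))\<^sup>2
      \<le> 3 * ((norm v)\<^sup>2 + 4 * m\<^sup>2 * (norm x)\<^sup>2 + \<beta>\<^sup>2 * r\<^sup>2 * (norm g)\<^sup>2)"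
    using norm_add3_squared_le[of v "(2 * m) *\<^sub>R x" "(\<beta> * r) *\<^sub>R g"]
    by (simp add: power_mult_distrib)
  from lyapunov_decay_certificate[OF _ _ this] assms(3-6) \<open>0 \<le> m\<close> \<open>0 \<le> r\<close>
  show ?thesis
    unfolding \<mu> s by (simp add: real_sqrt_mult)
qed

theorem lemma4p2:
  fixes f :: "'a::euclidean_space \<Rightarrow> real" and gradf :: "'a \<Rightarrow> 'a" and hessf :: "'a \<Rightarrow> 'a \<Rightarrow> 'a"
    and X V A :: "real \<Rightarrow> 'a" and T :: "real set"
    and \<mu> L \<beta> s :: real and xstar :: 'a
  assumes "0 < \<mu>" and "\<mu> \<le> L"
    and "S2_class \<mu> L f gradf hessf"
    and "\<forall>x. f xstar \<le> f x"
    and "0 \<le> \<beta>" and "\<beta> \<le> 1" and "0 < s"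
    and "open T"
    and "\<forall>t\<in>T. (X has_vector_derivative V t) (at t)"
    and "\<forall>t\<in>T. (V has_vector_derivative A t) (at t)"
    and "\<forall>t\<in>T. A t + (2 * sqrt \<mu>) *\<^sub>R V t + (\<beta> * sqrt s) *\<^sub>R hessf (X t) (V t)
                 + (1 + sqrt (\<mu> * s)) *\<^sub>R gradf (X t) = 0"
  defines "E \<equiv> \<lambda>t. (1 + sqrt (\<mu> * s)) * (f (X t) - f xstar) + 1/4 * (norm (V t))\<^sup>2
       + 1/4 * (norm (V t + (2 * sqrt \<mu>) *\<^sub>R (X t - xstar) + (\<beta> * sqrt s) *\<^sub>R gradf (X t)))\<^sup>2"
    and "\<Delta> \<equiv> \<lambda>t. 1/4 * ((8 * \<beta> * s * sqrt \<mu> - 3 * s * \<beta>\<^sup>2 * sqrt \<mu>) / 4 * (norm (gradf (X t)))\<^sup>2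
       + 2 * sqrt \<mu> * (norm (V t))\<^sup>2 + (sqrt \<mu> + \<mu> * sqrt s) * (f (X t) - f xstar))"
  shows "\<forall>t\<in>T. \<exists>D. (E has_real_derivative D) (at t) \<and>
           D \<le> - (sqrt \<mu> / 4) * E t - \<Delta> t \<and> D \<le> - (sqrt \<mu> / 4) * E t"
proof
  fix t assume "t \<in> T"
  note S = S2_classD[OF assms(3)]
  have grad_min: "gradf xstar = 0"
    using gradient_zero_at_minimum[OF S(1) assms(4)] .
  let ?D = "- sqrt \<mu> * (1 + sqrt (\<mu> * s)) * (gradf (X t) \<bullet> (X t - xstar))
    - \<beta> * sqrt s * (1 + sqrt (\<mu> * s)) / 2 * (norm (gradf (X t)))\<^sup>2
    - sqrt \<mu> * (norm (V t))\<^sup>2 - \<beta> * sqrt s / 2 * (V t \<bullet> hessf (X t) (V t))"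
  have deriv: "(E has_real_derivative ?D) (at t)"
    unfolding E_def using \<open>t \<in> T\<close> assms(9-11)
    by (intro energy_has_derivative_along_ode S) auto
  have "f (X t) - f xstar + \<mu> / 2 * (norm (X t - xstar))\<^sup>2 \<le> gradf (X t) \<bullet> (X t - xstar)"
    by (rule strongly_convex_gradient_inner_ge[OF S(3)])
  moreover have "\<mu> / 2 * (norm (X t - xstar))\<^sup>2 \<le> f (X t) - f xstar"
    by (rule strongly_convex_gap_ge[OF S(3) grad_min])
  moreover have "0 \<le> V t \<bullet> hessf (X t) (V t)"
    using monotone_derivative_nonneg[OF strongly_convex_gradient_monotone[OF S(3)] S(2)] assms(1)
    by (simp add: inner_commute)
  ultimately have decay: "?D \<le> - (sqrt \<mu> / 4) * E t - \<Delta> t"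
    unfolding E_def \<Delta>_def using assms(1,5,7) by (intro lyapunov_decay_pointwise) auto
  have "8 * \<beta> * s * sqrt \<mu> - 3 * s * \<beta>\<^sup>2 * sqrt \<mu> = \<beta> * (8 - 3 * \<beta>) * (s * sqrt \<mu>)"
    by (simp add: algebra_simps power2_eq_square)
  then have "0 \<le> 8 * \<beta> * s * sqrt \<mu> - 3 * s * \<beta>\<^sup>2 * sqrt \<mu>"
    using assms(1,5-7) by simp
  then have "0 \<le> \<Delta> t"
    unfolding \<Delta>_def using assms(1,4,7) by (intro mult_nonneg_nonneg add_nonneg_nonneg) auto
  with deriv decay show "\<exists>D. (E has_real_derivative D) (at t) \<and>
      D \<le> - (sqrt \<mu> / 4) * E t - \<Delta> t \<and> D \<le> - (sqrt \<mu> / 4) * E t"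
    by force
qed

end
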